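(* For every base $\mathcal{B}$, atomic multiset $L$ and ILL formulae $\varphi,\psi$: if $\varphi\Vdash^L_{\mathcal{B}}\psi$, then $!\varphi\Vdash^L_{\mathcal{B}}\psi$.
   Context: Fix a set $\mathbb{A}$ of propositional atoms. ILL formulae: $\phi ::= p\in\mathbb{A} \mid \top \mid 0 \mid 1 \mid \phi\multimap\phi \mid \phi\otimes\phi \mid \phi\,\&\,\phi \mid \phi\oplus\phi \mid\ !\phi$. All multisets are finite; "$\Gamma,\Delta$" denotes multiset union. Atomic rules and bases: an atomic sequent is $P\Rightarrow p$ with $P$ a multiset of atoms, $p$ an atom. An atomic box is a multiset of atomic sequents. An atomic rule is a triple $\langle\mathbf{A},\mathbf{S},p\rangle$ with $\mathbf{A}$ a multiset of atomic boxes, $\mathbf{S}$ an atomic box, $p$ an atom. A base is a set of atomic rules. An atom $p$ is persistent in $\mathcal{B}$ if some $\langle\varnothing,\mathbf{S},p\rangle\in\mathcal{B}$ has $\mathbf{S}\neq\varnothing$. Derivability $\vdash_{\mathcal{B}}$: (Ref) $p\vdash_{\mathcal{B}}p$; (App) if $\langle\mathbf{A},\mathbf{S},p\rangle\in\mathcal{B}$ with $\mathbf{A}=\{\mathbf{T}_1,\dots,\mathbf{T}_m\}$, and there are atomic multisets $C_1,\dots,C_n$ ($n\ge m$) and a multiset $D=\{d_{m+1},\dots,d_n\}$ of atoms persistent in $\mathcal{B}$ such that $C_i,Q\vdash_{\mathcal{B}}q$ for every $i\le m$ and every $Q\Rightarrow q\in\mathbf{T}_i$, $C_j\vdash_{\mathcal{B}}d_j$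 for every $m<j\le n$, and $D,U\vdash_{\mathcal{B}}v$ for every $U\Rightarrow v\in\mathbf{S}$, then $C_1,\dots,C_n\vdash_{\mathcal{B}}p$. Support $\Vdash^L_{\mathcal{B}}$ (base $\mathcal{B}$, atomic multiset $L$), by induction on formulae: $\Vdash^L_{\mathcal{B}}p$ iff $L\vdash_{\mathcal{B}}p$; $\Vdash^L_{\mathcal{B}}\varphi\multimap\psi$ iff $\varphi\Vdash^L_{\mathcal{B}}\psi$; $\Vdash^L_{\mathcal{B}}\varphi\otimes\psi$ iff for all $\mathcal{C}\supseteq\mathcal{B}$, atomic $K$, atoms $p$: if $\varphi,\psi\Vdash^K_{\mathcal{C}}p$ then $\Vdash^{L,K}_{\mathcal{C}}p$; $\Vdash^L_{\mathcal{B}}1$ iff for all $\mathcal{C}\supseteq\mathcal{B}$, $K$, $p$: if $\Vdash^K_{\mathcal{C}}p$ then $\Vdash^{L,K}_{\mathcal{C}}p$; $\Vdash^L_{\mathcal{B}}\varphi\&\psi$ iff $\Vdash^L_{\mathcal{B}}\varphi$ and $\Vdash^L_{\mathcal{B}}\psi$; $\Vdash^L_{\mathcal{B}}\varphi\oplus\psi$ iff for all $\mathcal{C}\supseteq\mathcal{B}$, $K$, $p$: if $\varphi\Vdash^K_{\mathcal{C}}p$ and $\psi\Vdash^K_{\mathcal{C}}p$ then $\Vdash^{L,K}_{\mathcal{C}}p$; $\Vdash^L_{\mathcal{B}}0$ iff $\Vdash^{L,K}_{\mathcal{B}}p$ for all atoms $p$ and atomic $K$; $\Vdash^L_{\mathcal{B}}\top$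 always; $\Vdash^L_{\mathcal{B}}!\varphi$ iff for all $\mathcal{C}\supseteq\mathcal{B}$, $K$, $p$: if (for all $\mathcal{D}\supseteq\mathcal{C}$, $\Vdash^{\varnothing}_{\mathcal{D}}\varphi$ implies $\Vdash^K_{\mathcal{D}}p$) then $\Vdash^{L,K}_{\mathcal{C}}p$. For nonempty multisets: $\Vdash^L_{\mathcal{B}}\Gamma,\Delta$ iff $L=K,M$ with $\Vdash^K_{\mathcal{B}}\Gamma$ and $\Vdash^M_{\mathcal{B}}\Delta$. For a nonempty antecedent written $!\Delta,\Theta$, where $!\Delta$ collects the formulae with top-level connective $!$ (with $\Delta$ the formulae under those $!$) and $\Theta$ contains none: $!\Delta,\Theta\Vdash^L_{\mathcal{B}}\varphi$ iff for all $\mathcal{C}\supseteq\mathcal{B}$ and atomic $K$, if $\Vdash^{\varnothing}_{\mathcal{C}}\delta$ for every $\delta\in\Delta$ and $\Vdash^K_{\mathcal{C}}\Theta$ then $\Vdash^{L,K}_{\mathcal{C}}\varphi$ (when $\Theta$ is empty, $K$ is empty). In particular $!\varphi\Vdash^L_{\mathcal{B}}\psi$ iff for all $\mathcal{C}\supseteq\mathcal{B}$, $\Vdash^{\varnothing}_{\mathcal{C}}\varphi$ implies $\Vdash^L_{\mathcal{C}}\psi$. An empty antecedent: $\varnothing\Vdash^L_{\mathcal{B}}\varphi$ means $\Vdash^L_{\mathcal{B}}\varphi$. *)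

theory Defs
  imports Main "HOL-Library.Multiset"
begin

datatype 'a form =
    At 'a | Top | Zero | One
  | Lolli "'a form" "'a form"
  | Tensor "'a form" "'a form"
  | With "'a form" "'a form"
  | Plus "'a form" "'a form"
  | Bang "'a form"

type_synonym 'a aseq = "'a multiset \<times> 'a"
type_synonym 'a abox = "'a aseq multiset"
type_synonym 'a arule = "'a abox multiset \<times> 'a abox \<times> 'a"
type_synonym 'a base = "'a arule set"

definition persistent :: "'a base \<Rightarrow> 'a \<Rightarrow> bool" where
  "persistent B p \<longleftrightarrow> (\<exists>S. ({#}, S, p) \<in> B \<and> S \<noteq> {#})"

text \<open>Derivability. In (App) the multiset A = {T_1,..,T_m} is enumerated by a list Ts,
  C_1..C_m by the list Cs, the persistent atoms d_{m+1}..d_n by the list ds and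
  C_{m+1}..C_n by the list Es.\<close>

inductive derives :: "'a base \<Rightarrow> 'a multiset \<Rightarrow> 'a \<Rightarrow> bool" for B where
  Ref: "derives B {#p#} p"
| App: "\<lbrakk> (A, S, p) \<in> B; mset Ts = A; length Cs = length Ts; length Es = length ds;
          \<forall>d \<in> set ds. persistent B d;
          \<forall>i < length Ts. \<forall>Q q. (Q, q) \<in># Ts ! i \<longrightarrow> derives B (Cs ! i + Q) q;
          \<forall>j < length ds. derives B (Es ! j) (ds ! j);
          \<forall>U v. (U, v) \<in># S \<longrightarrow> derives B (mset ds + U) v \<rbrakk>
        \<Longrightarrow> derives B (sum_list Cs + sum_list Es) p"

text \<open>Antecedents occurring inside clauses are unfolded following the paper's clause for
  antecedents !Delta,Theta: a formula Bang d in the antecedent contributes the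
  requirement  sup D {#} d  and no atomic resources, a non-banged formula chi
  contributes  sup D K chi  for its share K of the resources.\<close>

fun sup :: "'a base \<Rightarrow> 'a multiset \<Rightarrow> 'a form \<Rightarrow> bool" where
  "sup B L (At p) = derives B L p"
| "sup B L (Lolli \<phi> \<psi>) =
     (case \<phi> of
        Bang \<delta> \<Rightarrow> (\<forall>C. B \<subseteq> C \<longrightarrow> sup C {#} \<delta> \<longrightarrow> sup C L \<psi>)
      | _ \<Rightarrow> (\<forall>C K. B \<subseteq> C \<longrightarrow> sup C K \<phi> \<longrightarrow> sup C (L + K) \<psi>))"
| "sup B L (Tensor \<phi> \<psi>) =
     (\<forall>C K p. B \<subseteq> C \<longrightarrow>
        (\<forall>D K'. C \<subseteq> D \<longrightarrow>
           (\<exists>K1 K2. K' = K1 + K2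
              \<and> (case \<phi> of Bang \<delta> \<Rightarrow> K1 = {#} \<and> sup D {#} \<delta> | _ \<Rightarrow> sup D K1 \<phi>)
              \<and> (case \<psi> of Bang \<delta> \<Rightarrow> K2 = {#} \<and> sup D {#} \<delta> | _ \<Rightarrow> sup D K2 \<psi>))
           \<longrightarrow> derives D (K + K') p)
        \<longrightarrow> derives C (L + K) p)"
| "sup B L One = (\<forall>C K p. B \<subseteq> C \<longrightarrow> derives C K p \<longrightarrow> derives C (L + K) p)"
| "sup B L (With \<phi> \<psi>) = (sup B L \<phi> \<and> sup B L \<psi>)"
| "sup B L (Plus \<phi> \<psi>) =
     (\<forall>C K p. B \<subseteq> C \<longrightarrow>
        (case \<phi> of
           Bang \<delta> \<Rightarrow> (\<forall>D. C \<subseteq> D \<longrightarrow> sup D {#} \<delta> \<longrightarrow> derives D K p)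
         | _ \<Rightarrow> (\<forall>D K'. C \<subseteq> D \<longrightarrow> sup D K' \<phi> \<longrightarrow> derives D (K + K') p)) \<longrightarrow>
        (case \<psi> of
           Bang \<delta> \<Rightarrow> (\<forall>D. C \<subseteq> D \<longrightarrow> sup D {#} \<delta> \<longrightarrow> derives D K p)
         | _ \<Rightarrow> (\<forall>D K'. C \<subseteq> D \<longrightarrow> sup D K' \<psi> \<longrightarrow> derives D (K + K') p)) \<longrightarrow>
        derives C (L + K) p)"
| "sup B L Zero = (\<forall>p K. derives B (L + K) p)"
| "sup B L Top = True"
| "sup B L (Bang \<phi>) =
     (\<forall>C K p. B \<subseteq> C \<longrightarrow>
        (\<forall>D. C \<subseteq> D \<longrightarrow> sup D {#} \<phi> \<longrightarrow> derives D K p) \<longrightarrow>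
        derives C (L + K) p)"

definition supm :: "'a base \<Rightarrow> 'a multiset \<Rightarrow> 'a form multiset \<Rightarrow> bool" where
  "supm B L \<Gamma> \<longleftrightarrow> (\<exists>fs Ls. mset fs = \<Gamma> \<and> length Ls = length fs \<and> L = sum_list Ls
                          \<and> (\<forall>i < length fs. sup B (Ls ! i) (fs ! i)))"

fun is_bang :: "'a form \<Rightarrow> bool" where
  "is_bang (Bang _) = True"
| "is_bang _ = False"

fun unbang :: "'a form \<Rightarrow> 'a form" where
  "unbang (Bang \<phi>) = \<phi>"
| "unbang \<phi> = \<phi>"

definition cons :: "'a base \<Rightarrow> 'a multiset \<Rightarrow> 'a form multiset \<Rightarrow> 'a form \<Rightarrow> bool" where
  "cons B L \<Gamma> \<phi> \<longleftrightarrow>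
     (if \<Gamma> = {#} then sup B L \<phi>
      else (\<forall>C K. B \<subseteq> C \<longrightarrow>
              (\<forall>\<delta> \<in># image_mset unbang (filter_mset is_bang \<Gamma>). sup C {#} \<delta>) \<longrightarrow>
              supm C K (filter_mset (\<lambda>\<chi>. \<not> is_bang \<chi>) \<Gamma>) \<longrightarrow>
              sup C (L + K) \<phi>))"

end

theory Submission
  imports Defs
begin

(* For a formula phi without top-level bang, !phi |- psi is phi |- psi instantiated at the empty
   share of resources.  For phi = !delta one needs dereliction, |-_C !delta implies |-_C delta.
   Unfolded at empty resources, |-_C !delta says only that an atomic conclusion holding in every
   extension of C that supports delta already holds at C.  Induction on formulae lifts this from
   atoms to all formulae: every connective other than -o and & is itself defined through atomic
   conclusions under premises that persist along base extensions, and -o and & inherit it from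
   their components. *)

lemma persistent_mono: "persistent B p \<Longrightarrow> B \<subseteq> C \<Longrightarrow> persistent C p"
  unfolding persistent_def by blast

lemma derives_mono: "derives B L p \<Longrightarrow> B \<subseteq> C \<Longrightarrow> derives C L p"
proof (induction rule: derives.induct)
  case Ref
  show ?case by (rule derives.Ref)
next
  case (App A S p Ts Cs Es ds)
  then show ?case
    by (intro derives.App[of A S p C Ts Cs Es ds]) (auto intro: persistent_mono)
qed

definition sup_antecedent :: "'a base \<Rightarrow> 'a multiset \<Rightarrow> 'a form \<Rightarrow> bool" where
  "sup_antecedent C K \<chi> \<longleftrightarrow>
     (if is_bang \<chi> then K = {#} \<and> sup C {#} (unbang \<chi>) else sup C K \<chi>)"

lemma sup_Lolli_iff:
  "sup B L (Lolli \<chi> \<psi>) \<longleftrightarrow>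
     (\<forall>C K. B \<subseteq> C \<longrightarrow> sup_antecedent C K \<chi> \<longrightarrow> sup C (L + K) \<psi>)"
  by (cases \<chi>) (auto simp: sup_antecedent_def)

lemma case_Bang_derives_eq:
  "(case \<chi> of
      Bang \<delta> \<Rightarrow> (\<forall>D. C \<subseteq> D \<longrightarrow> sup D {#} \<delta> \<longrightarrow> derives D K p)
    | _ \<Rightarrow> (\<forall>D K'. C \<subseteq> D \<longrightarrow> sup D K' \<chi> \<longrightarrow> derives D (K + K') p))
   \<longleftrightarrow> (\<forall>D K'. C \<subseteq> D \<longrightarrow> sup_antecedent D K' \<chi> \<longrightarrow> derives D (K + K') p)"
  by (cases \<chi>) (auto simp: sup_antecedent_def)

lemma sup_Plus_iff:
  "sup B L (Plus \<chi> \<psi>) \<longleftrightarrow>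
     (\<forall>C K p. B \<subseteq> C \<longrightarrow>
        (\<forall>D K'. C \<subseteq> D \<longrightarrow> sup_antecedent D K' \<chi> \<longrightarrow> derives D (K + K') p) \<and>
        (\<forall>D K'. C \<subseteq> D \<longrightarrow> sup_antecedent D K' \<psi> \<longrightarrow> derives D (K + K') p) \<longrightarrow>
        derives C (L + K) p)"
  by (simp only: sup.simps case_Bang_derives_eq imp_conjL)

lemma supm_empty: "supm C K {#} \<longleftrightarrow> K = {#}"
  unfolding supm_def by auto

lemma supm_singleton: "supm C K {#\<chi>#} \<longleftrightarrow> sup C K \<chi>"
proof
  assume "supm C K {#\<chi>#}"
  then obtain fs Ls where "mset fs = {#\<chi>#}" "length Ls = length fs" "K = sum_list Ls"
    "\<forall>i < length fs. sup C (Ls ! i) (fs ! i)"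
    unfolding supm_def by blast
  then show "sup C K \<chi>" by (cases Ls) auto
next
  assume "sup C K \<chi>"
  then show "supm C K {#\<chi>#}"
    unfolding supm_def by (intro exI[of _ "[\<chi>]"] exI[of _ "[K]"]) auto
qed

lemma cons_singleton_iff:
  "cons B L {#\<chi>#} \<psi> \<longleftrightarrow>
     (\<forall>C K. B \<subseteq> C \<longrightarrow> sup_antecedent C K \<chi> \<longrightarrow> sup C (L + K) \<psi>)"
  unfolding cons_def sup_antecedent_def
  by (cases "is_bang \<chi>") (auto simp: supm_empty supm_singleton)

lemma cons_singleton_Bang_iff:
  "cons B L {#Bang \<chi>#} \<psi> \<longleftrightarrow> (\<forall>C. B \<subseteq> C \<longrightarrow> sup C {#} \<chi> \<longrightarrow> sup C L \<psi>)"
  unfolding cons_singleton_iff sup_antecedent_def by simp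

lemma sup_mono: "sup B L \<chi> \<Longrightarrow> B \<subseteq> C \<Longrightarrow> sup C L \<chi>"
proof (induction \<chi> arbitrary: L)
  case (Lolli \<chi> \<psi>)
  then show ?case unfolding sup_Lolli_iff by blast
qed (auto intro: derives_mono)

lemma sup_antecedent_mono:
  "sup_antecedent B K \<chi> \<Longrightarrow> B \<subseteq> C \<Longrightarrow> sup_antecedent C K \<chi>"
  unfolding sup_antecedent_def by (auto intro: sup_mono)

definition atomic_elim :: "'a base \<Rightarrow> ('a base \<Rightarrow> bool) \<Rightarrow> bool" where
  "atomic_elim C P \<longleftrightarrow>
     (\<forall>C' K p. C \<subseteq> C' \<longrightarrow> (\<forall>D. C' \<subseteq> D \<longrightarrow> P D \<longrightarrow> derives D K p) \<longrightarrow> derives C' K p)"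

lemma atomic_elim_mono: "atomic_elim B P \<Longrightarrow> B \<subseteq> C \<Longrightarrow> atomic_elim C P"
  unfolding atomic_elim_def by (meson subset_trans)

lemma sup_Bang_empty_iff: "sup C {#} (Bang \<delta>) \<longleftrightarrow> atomic_elim C (\<lambda>D. sup D {#} \<delta>)"
  unfolding atomic_elim_def by (simp only: sup.simps add_0)

lemma atomic_elimD:
  "atomic_elim C P \<Longrightarrow> (\<And>D. C \<subseteq> D \<Longrightarrow> P D \<Longrightarrow> derives D K p) \<Longrightarrow> derives C K p"
  unfolding atomic_elim_def by blast

lemma atomic_elim_derives:
  assumes elim: "atomic_elim C P"
    and upward: "\<And>C' C'' K p. R C' K p \<Longrightarrow> C' \<subseteq> C'' \<Longrightarrow> R C'' K p"
    and step: "\<And>D. C \<subseteq> D \<Longrightarrow> P D \<Longrightarrow> \<forall>C' K p. D \<subseteq> C' \<longrightarrow> R C' K p \<longrightarrow> derives C' (M + K) p"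
  shows "\<forall>C' K p. C \<subseteq> C' \<longrightarrow> R C' K p \<longrightarrow> derives C' (M + K) p"
proof (intro allI impI)
  fix C' K p assume "C \<subseteq> C'" and "R C' K p"
  show "derives C' (M + K) p"
  proof (rule atomic_elimD[OF atomic_elim_mono[OF elim \<open>C \<subseteq> C'\<close>]])
    fix D assume "C' \<subseteq> D" and "P D"
    have "C \<subseteq> D" using \<open>C \<subseteq> C'\<close> \<open>C' \<subseteq> D\<close> by (rule subset_trans)
    moreover have "R D K p" using \<open>R C' K p\<close> \<open>C' \<subseteq> D\<close> by (rule upward)
    ultimately show "derives D (M + K) p" using step \<open>P D\<close> by blast
  qed
qed

lemma atomic_elim_sup:
  assumes "atomic_elim C P" and "\<And>D. C \<subseteq> D \<Longrightarrow> P D \<Longrightarrow> sup D M \<chi>"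
  shows "sup C M \<chi>"
  using assms
proof (induction \<chi> arbitrary: C M)
  case (At p)
  then show ?case by (auto intro: atomic_elimD)
next
  case Zero
  then show ?case by (auto intro: atomic_elimD)
next
  case One
  show ?case
    unfolding sup.simps
    by (rule atomic_elim_derives[OF One.prems(1) _ One.prems(2)[unfolded sup.simps]])
      (rule derives_mono)
next
  case (Tensor \<chi> \<psi>)
  show ?case
    unfolding sup.simps
    by (rule atomic_elim_derives[OF Tensor.prems(1) _ Tensor.prems(2)[unfolded sup.simps]])
      (blast intro: subset_trans)
next
  case (Plus \<chi> \<psi>)
  show ?case
    unfolding sup_Plus_iff
    by (rule atomic_elim_derives[OF Plus.prems(1) _ Plus.prems(2)[unfolded sup_Plus_iff]])
      (blast intro: subset_trans)
next
  case (Bang \<chi>)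
  show ?case
    unfolding sup.simps
    by (rule atomic_elim_derives[OF Bang.prems(1) _ Bang.prems(2)[unfolded sup.simps]])
      (blast intro: subset_trans)
next
  case (With \<chi> \<psi>)
  then show ?case by auto
next
  case (Lolli \<chi> \<psi>)
  show ?case
    unfolding sup_Lolli_iff
  proof (intro allI impI)
    fix C' K assume "C \<subseteq> C'" and "sup_antecedent C' K \<chi>"
    show "sup C' (M + K) \<psi>"
    proof (rule Lolli.IH(2))
      show "atomic_elim C' P" using Lolli.prems(1) \<open>C \<subseteq> C'\<close> by (rule atomic_elim_mono)
      fix D assume "C' \<subseteq> D" and "P D"
      then have "sup D M (Lolli \<chi> \<psi>)"
        using Lolli.prems(2) subset_trans[OF \<open>C \<subseteq> C'\<close>] by blast
      moreover have "sup_antecedent D K \<chi>"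
        using \<open>sup_antecedent C' K \<chi>\<close> \<open>C' \<subseteq> D\<close> by (rule sup_antecedent_mono)
      ultimately show "sup D (M + K) \<psi>" unfolding sup_Lolli_iff by blast
    qed
  qed
qed simp

lemma sup_Bang_dereliction: "sup C {#} (Bang \<delta>) \<Longrightarrow> sup C {#} \<delta>"
  unfolding sup_Bang_empty_iff by (erule atomic_elim_sup)

lemma sup_antecedent_of_sup_empty: "sup C {#} \<chi> \<Longrightarrow> sup_antecedent C {#} \<chi>"
  using sup_Bang_dereliction[of C "unbang \<chi>"] unfolding sup_antecedent_def
  by (cases \<chi>) (simp_all del: sup.simps)

theorem lemma8:
  fixes B :: "'a base" and L :: "'a multiset" and \<phi> \<psi> :: "'a form"
  assumes "cons B L {#\<phi>#} \<psi>"
  shows "cons B L {#Bang \<phi>#} \<psi>"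
  unfolding cons_singleton_Bang_iff
proof (intro allI impI)
  fix C assume "B \<subseteq> C" and "sup C {#} \<phi>"
  then have "sup C (L + {#}) \<psi>"
    using assms sup_antecedent_of_sup_empty unfolding cons_singleton_iff by blast
  then show "sup C L \<psi>" by simp
qed

end
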